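(* Let $m$ and $k$ be positive integers with $3\leq k\leq m/2$, and let $H$ be $\mathrm{Sym}(m)$ or $\mathrm{Alt}(m)$ acting on the set of $k$-element subsets of $\{1,\ldots,m\}$. If $H$ contains a permutation $g$ having at most four cycles in this action, then $m\leq 7$.
   Context: The number of cycles of a permutation is the number of orbits of the cyclic group it generates, fixed points included. Throughout this part of the paper it is assumed that $k\le m/2$. *)

theory Defs
  imports "HOL-Combinatorics.Combinatorics"
begin

definition Sym :: "nat \<Rightarrow> (nat \<Rightarrow> nat) set" where
  "Sym m = {g. g permutes {1..m}}"

definition Alt :: "nat \<Rightarrow> (nat \<Rightarrow> nat) set" where
  "Alt m = {g. g permutes {1..m} \<and> evenperm g}"

definition ksets :: "nat \<Rightarrow> nat \<Rightarrow> nat set set" where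
  "ksets m k = {A. A \<subseteq> {1..m} \<and> card A = k}"

text \<open>Orbit of a k-set A under the cyclic group generated by g (g has finite order,
  so non-negative powers suffice).\<close>
definition kset_orbit :: "(nat \<Rightarrow> nat) \<Rightarrow> nat set \<Rightarrow> nat set set" where
  "kset_orbit g A = {(g ^^ n) ` A | n. True}"

definition num_cycles_on_ksets :: "(nat \<Rightarrow> nat) \<Rightarrow> nat \<Rightarrow> nat \<Rightarrow> nat" where
  "num_cycles_on_ksets g m k = card (kset_orbit g ` ksets m k)"

end

theory Submission
  imports Defs
begin

text \<open>If every cycle of \<open>g\<close> has length at most 3, then \<open>g\<^sup>6\<close> fixes every point, so each
  orbit on \<open>k\<close>-sets has at most 6 elements and there are at least
  \<open>C(m,k)/6 \<ge> C(8,3)/6 > 4\<close> orbits. Otherwise \<open>g\<close> has a cycle \<open>D\<close> of length \<open>l \<ge> 4\<close>.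
  The size of \<open>A \<inter> D\<close> is constant on orbits, and since \<open>g\<^sup>l\<close> fixes \<open>D\<close> pointwise, the
  \<open>k\<close>-sets with \<open>|A \<inter> D| = j\<close> fall into at least \<open>C(l,j)/l\<close> orbits. Summing over the
  values of \<open>j\<close> compatible with \<open>k\<close> and \<open>m - l\<close> always gives at least five orbits.\<close>

lemma card_le_mult_card_image:
  assumes "finite A" "\<And>y. y \<in> f ` A \<Longrightarrow> card {x\<in>A. f x = y} \<le> p"
  shows "card A \<le> p * card (f ` A)"
proof -
  have "card A = card (\<Union>y\<in>f ` A. {x\<in>A. f x = y})" by (rule arg_cong[of _ _ card]) auto
  also have "\<dots> \<le> (\<Sum>y\<in>f ` A. card {x\<in>A. f x = y})"
    using assms(1) by (intro card_UN_le) simp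
  also have "\<dots> \<le> (\<Sum>y\<in>f ` A. p)" using assms(2) by (rule sum_mono)
  finally show ?thesis by (simp add: mult.commute)
qed

lemma funpow_image_Int_invariant:
  assumes "inj g" "g ` D = D"
  shows "(g ^^ n) ` A \<inter> D = (g ^^ n) ` (A \<inter> D)"
proof -
  have "bij_betw g D D" using assms by (auto simp: bij_betw_def intro: inj_on_subset)
  then have "(g ^^ n) ` D = D" by (intro bij_betw_imp_surj_on bij_betw_funpow)
  then show ?thesis using image_Int[OF inj_fn[OF assms(1)]] by simp
qed

lemma binomial_le_binomial_inner:
  assumes "i \<le> j" "j + i \<le> n"
  shows "n choose i \<le> n choose j"
proof (cases "2 * j \<le> n")
  case True
  with assms(1) show ?thesis by (rule binomial_mono)
next
  case False
  then have "n choose i \<le> n choose (n - j)" using assms by (intro binomial_mono) auto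
  also have "\<dots> = n choose j" using assms by (intro binomial_symmetric[symmetric]) auto
  finally show ?thesis .
qed

lemma binomial_pred_le_if_binomial_le:
  assumes "0 < j" "0 < n" "n choose j \<le> n * c"
  shows "(n - 1) choose (j - 1) \<le> j * c"
proof -
  have "n * ((n - 1) choose (j - 1)) = j * (n choose j)"
    using times_binomial_minus1_eq[OF assms(1)] by simp
  also have "\<dots> \<le> n * (j * c)" using assms(3) by (simp add: mult.left_commute)
  finally show ?thesis using assms(2) by simp
qed

lemma self_in_kset_orbit: "A \<in> kset_orbit g A"
  unfolding kset_orbit_def by (auto intro: exI[where x=0])

lemma kset_orbit_eqD:
  assumes "kset_orbit g B = kset_orbit g A"
  obtains n where "B = (g ^^ n) ` A"
proof -
  have "B \<in> kset_orbit g A" using self_in_kset_orbit[of B g] assms by simp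
  then show thesis using that unfolding kset_orbit_def by blast
qed

lemma finite_ksets: "finite (ksets m k)"
  unfolding ksets_def by (rule finite_subset[of _ "Pow {1..m}"]) auto

lemma card_Int_eq_if_kset_orbit_eq:
  assumes "inj g" "g ` D = D" "kset_orbit g B = kset_orbit g A"
  shows "card (B \<inter> D) = card (A \<inter> D)"
proof -
  obtain n where "B = (g ^^ n) ` A" using assms(3) by (rule kset_orbit_eqD)
  then have "B \<inter> D = (g ^^ n) ` (A \<inter> D)"
    using funpow_image_Int_invariant[OF assms(1,2)] by simp
  then show ?thesis using card_image[OF inj_on_subset[OF inj_fn[OF assms(1)] subset_UNIV]] by simp
qed

definition level_orbits :: "(nat \<Rightarrow> nat) \<Rightarrow> nat \<Rightarrow> nat \<Rightarrow> nat set \<Rightarrow> nat \<Rightarrow> nat set set set" where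
  "level_orbits g m k D j = kset_orbit g ` {A \<in> ksets m k. card (A \<inter> D) = j}"

lemma sum_card_level_orbits_le:
  assumes "inj g" "g ` D = D" "finite J"
  shows "(\<Sum>j\<in>J. card (level_orbits g m k D j)) \<le> num_cycles_on_ksets g m k"
proof -
  have finite: "finite (level_orbits g m k D j)" for j
    unfolding level_orbits_def by (rule finite_imageI, rule finite_subset[OF _ finite_ksets]) auto
  have disjoint: "level_orbits g m k D i \<inter> level_orbits g m k D j = {}" if "i \<noteq> j" for i j
  proof -
    have False if "Q \<in> level_orbits g m k D i" "Q \<in> level_orbits g m k D j" for Q
    proof -
      from that obtain A B where "card (A \<inter> D) = i" "card (B \<inter> D) = j"
        and "kset_orbit g B = kset_orbit g A"
        unfolding level_orbits_def by auto
      then show False using card_Int_eq_if_kset_orbit_eq[OF assms(1,2)] \<open>i \<noteq> j\<close> by metis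
    qed
    then show ?thesis by blast
  qed
  have "(\<Sum>j\<in>J. card (level_orbits g m k D j)) = card (\<Union>j\<in>J. level_orbits g m k D j)"
    using finite disjoint assms(3) by (subst card_UN_disjoint) auto
  also have "\<dots> \<le> card (kset_orbit g ` ksets m k)"
    by (rule card_mono) (auto simp: finite_ksets level_orbits_def)
  finally show ?thesis unfolding num_cycles_on_ksets_def .
qed

lemma kset_orbit_eq_imp_periodic_image:
  assumes "inj g" "g ` D = D" "0 < p" "\<forall>y\<in>D. (g ^^ p) y = y"
    and "S \<subseteq> D" "S' \<subseteq> D" "Y \<inter> D = {}"
    and "kset_orbit g (S \<union> Y) = kset_orbit g (S' \<union> Y)"
  shows "\<exists>i<p. S = (g ^^ i) ` S'"
proof -
  obtain n where n: "S \<union> Y = (g ^^ n) ` (S' \<union> Y)" using assms(8) by (rule kset_orbit_eqD)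
  have S'_part: "(S' \<union> Y) \<inter> D = S'" using assms(6,7) by auto
  have "S = (S \<union> Y) \<inter> D" using assms(5,7) by auto
  also have "\<dots> = (g ^^ n) ` S'"
    unfolding n funpow_image_Int_invariant[OF assms(1,2)] S'_part ..
  also have "\<dots> = (g ^^ (n mod p)) ` S'"
    using assms(4,6) by (intro image_cong) (auto simp: funpow_mod_eq)
  finally show ?thesis using assms(3) by (intro exI[of _ "n mod p"]) simp
qed

text \<open>Fix \<open>Y\<close> outside \<open>D\<close> of size \<open>k - j\<close>; an orbit contains at most \<open>p\<close> of the sets
  \<open>S \<union> Y\<close> with \<open>S\<close> a \<open>j\<close>-subset of \<open>D\<close>.\<close>

lemma binomial_le_card_level_orbits:
  assumes "inj g" "D \<subseteq> {1..m}" "g ` D = D" "0 < p" "\<forall>y\<in>D. (g ^^ p) y = y"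
    and "j \<le> k" "k - j \<le> m - card D"
  shows "card D choose j \<le> p * card (level_orbits g m k D j)"
proof -
  have finite_D: "finite D" using assms(2) finite_subset by blast
  have "k - j \<le> card ({1..m} - D)" using assms(2,7) finite_D by (simp add: card_Diff_subset)
  then obtain Y where Y: "Y \<subseteq> {1..m} - D" "card Y = k - j" "finite Y"
    by (rule obtain_subset_with_card_n)
  define SS where "SS = {S. S \<subseteq> D \<and> card S = j}"
  define f where "f S = kset_orbit g (S \<union> Y)" for S
  have "finite SS" unfolding SS_def using finite_D by simp
  moreover have "card {S\<in>SS. f S = Q} \<le> p" if "Q \<in> f ` SS" for Q
  proof -
    obtain S' where S': "S' \<in> SS" "Q = f S'" using \<open>Q \<in> f ` SS\<close> by blast
    have "{S\<in>SS. f S = Q} \<subseteq> (\<lambda>i. (g ^^ i) ` S') ` {..<p}"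
    proof
      fix S assume "S \<in> {S\<in>SS. f S = Q}"
      then have "S \<subseteq> D" "kset_orbit g (S \<union> Y) = kset_orbit g (S' \<union> Y)"
        using S' unfolding SS_def f_def by auto
      moreover have "S' \<subseteq> D" "Y \<inter> D = {}" using S'(1) Y(1) unfolding SS_def by auto
      ultimately obtain i where "i < p" "S = (g ^^ i) ` S'"
        using kset_orbit_eq_imp_periodic_image[OF assms(1,3,4,5)] by blast
      then show "S \<in> (\<lambda>i. (g ^^ i) ` S') ` {..<p}" by blast
    qed
    then have "card {S\<in>SS. f S = Q} \<le> card ((\<lambda>i. (g ^^ i) ` S') ` {..<p})"
      by (intro card_mono) auto
    also have "\<dots> \<le> p" using card_image_le[of "{..<p}"] by simp
    finally show ?thesis .
  qed
  ultimately have "card SS \<le> p * card (f ` SS)" by (rule card_le_mult_card_image)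
  then have "card D choose j \<le> p * card (f ` SS)" unfolding SS_def n_subsets[OF finite_D] .
  also have "\<dots> \<le> p * card (level_orbits g m k D j)"
  proof (intro mult_le_mono2 card_mono)
    show "finite (level_orbits g m k D j)"
      unfolding level_orbits_def by (rule finite_imageI, rule finite_subset[OF _ finite_ksets]) auto
    show "f ` SS \<subseteq> level_orbits g m k D j"
    proof
      fix Q assume "Q \<in> f ` SS"
      then obtain S where S: "S \<subseteq> D" "card S = j" "Q = f S" unfolding SS_def by blast
      have "finite S" using finite_subset[OF S(1) finite_D] .
      moreover note \<open>finite Y\<close>
      moreover have "S \<inter> Y = {}" "(S \<union> Y) \<inter> D = S" using S(1) Y(1) by auto
      ultimately have "S \<union> Y \<in> ksets m k" "card ((S \<union> Y) \<inter> D) = j"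
        using S Y assms(2,6) unfolding ksets_def by (auto simp: card_Un_disjoint)
      then show "Q \<in> level_orbits g m k D j" unfolding level_orbits_def S(3) f_def by blast
    qed
  qed
  finally show ?thesis .
qed

lemma image_orbit:
  assumes "permutation g"
  shows "g ` orbit g x = orbit g x"
proof (rule endo_inj_surj)
  show "finite (orbit g x)" using assms by (intro finite_orbit permutation_self_in_orbit)
  show "g ` orbit g x \<subseteq> orbit g x" by (auto intro: orbit.step)
  show "inj_on g (orbit g x)"
    using assms permutation_bijective bij_is_inj inj_on_subset by blast
qed

lemma funpow_card_orbit:
  assumes "permutation g" "y \<in> orbit g x"
  shows "(g ^^ card (orbit g x)) y = y"
proof -
  have y: "y \<in> orbit g y" using assms(1) by (rule permutation_self_in_orbit)
  have "orbit g x = orbit g y" using orbit_cyclic_eq3[OF cyclic_on_orbit'[OF assms(1)] assms(2)] ..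
  also have "card \<dots> = funpow_dist1 g y y"
    using orbit_conv_funpow_dist1[OF y] inj_on_funpow_dist1[OF y] by (simp add: card_image)
  finally show ?thesis using funpow_dist1_prop[OF y] by simp
qed

lemma funpow_six_if_card_orbit_le_three:
  assumes "permutation g" "card (orbit g x) \<le> 3"
  shows "(g ^^ 6) x = x"
proof -
  let ?l = "card (orbit g x)"
  have "finite (orbit g x)" using assms(1) by (intro finite_orbit permutation_self_in_orbit)
  then have "0 < ?l" by (simp add: card_gt_0_iff orbit_nonempty)
  with assms(2) have "?l \<in> {1, 2, 3}" by auto
  then have "6 mod ?l = 0" by auto
  moreover have "(g ^^ ?l) x = x" using assms(1) by (intro funpow_card_orbit permutation_self_in_orbit)
  ultimately show ?thesis using funpow_mod_eq[where f = g and n = ?l and m = 6] by simp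
qed

text \<open>Here \<open>c j\<close> counts the orbits of \<open>k\<close>-sets meeting a cycle of length \<open>l\<close> in \<open>j\<close>
  points; \<open>j\<close> is realisable exactly when \<open>j \<le> k\<close> and \<open>k - j \<le> m - l\<close>.\<close>

lemma five_le_sum_levels:
  fixes c :: "nat \<Rightarrow> nat"
  assumes "4 \<le> l" "l \<le> m" "8 \<le> m" "3 \<le> k" "2 * k \<le> m"
    and bound: "\<And>j. j \<le> k \<Longrightarrow> k - j \<le> m - l \<Longrightarrow> l choose j \<le> l * c j"
  shows "5 \<le> (\<Sum>j\<in>{k - (m - l)..k}. c j)"
proof -
  define r where "r = m - l"
  have inner: "(l - 1) choose (i - 1) \<le> i * c j"
    if "0 < i" "i \<le> j" "j + i \<le> l" "j \<le> k" "k - j \<le> r" for i j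
    using binomial_le_binomial_inner[OF that(2,3)] bound[OF that(4)] that(1,5) assms(1)
    by (intro binomial_pred_le_if_binomial_le) (auto simp: r_def)
  have one: "1 \<le> c j" if "j \<le> l" "j \<le> k" "k - j \<le> r" for j
    using bound[of j] that zero_less_binomial[of j l] by (cases "c j") (auto simp: r_def)
  have middle: "l - 1 \<le> 2 * c j" if "2 \<le> j" "j + 2 \<le> l" "j \<le> k" "k - j \<le> r" for j
    using inner[of 2 j] that by simp
  have sum_ge: "(\<Sum>j\<in>J. c j) \<le> (\<Sum>j\<in>{k - r..k}. c j)" if "J \<subseteq> {k - r..k}" for J
    using that by (intro sum_mono2) auto
  consider "r = 0" | "r = 1 \<or> r = 2" | "3 \<le> r" by linarith
  then show ?thesis
  proof cases
    case 1
    have "(l - 1) choose (3 - 1) \<le> 3 * c k"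
      using inner[of 3 k] 1 assms by (simp add: r_def)
    moreover have "(7::nat) choose 2 \<le> (l - 1) choose 2"
      using 1 assms(3) by (intro binomial_right_mono) (simp add: r_def)
    ultimately have "5 \<le> c k" by (simp add: numeral_eq_Suc)
    with 1 show ?thesis by (simp add: r_def)
  next
    case 2
    have three: "3 \<le> c j" if "j = k - 1 \<or> j = k" for j
    proof -
      have "l - 1 \<le> 2 * c j" using that 2 assms by (intro middle) (auto simp: r_def)
      moreover have "6 \<le> l" using 2 assms(3) by (auto simp: r_def)
      ultimately show ?thesis by linarith
    qed
    have "3 \<le> c (k - 1)" "3 \<le> c k" by (simp_all add: three)
    then have "5 \<le> (\<Sum>j\<in>{k - 1, k}. c j)" using assms(4) by simp
    also have "\<dots> \<le> (\<Sum>j\<in>{k - r..k}. c j)" using 2 by (intro sum_ge) auto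
    finally show ?thesis by (simp add: r_def)
  next
    case 3
    define a where "a = k - min k r"
    have "1 \<le> c a" "1 \<le> c (a + 1)" "1 \<le> c (a + 3)"
      using one[of a] one[of "a + 1"] one[of "a + 3"] 3 assms by (auto simp: a_def r_def)
    moreover have "2 \<le> c (a + 2)"
    proof -
      have "a + 4 \<le> l" using 3 assms by (auto simp: a_def r_def min_def)
      then have "l - 1 \<le> 2 * c (a + 2)" using 3 assms(4) by (intro middle) (auto simp: a_def)
      then show ?thesis using assms(1) by linarith
    qed
    ultimately have "5 \<le> (\<Sum>j\<in>{a, a + 1, a + 2, a + 3}. c j)" by simp
    also have "\<dots> \<le> (\<Sum>j\<in>{k - r..k}. c j)" using 3 assms(4) by (intro sum_ge) (auto simp: a_def)
    finally show ?thesis by (simp add: r_def)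
  qed
qed

lemma binomial_le_mult_num_cycles_if_periodic:
  assumes "g permutes {1..m}" "0 < p" "\<forall>x\<in>{1..m}. (g ^^ p) x = x"
  shows "m choose k \<le> p * num_cycles_on_ksets g m k"
proof -
  have inj: "inj g" using assms(1) by (rule permutes_inj)
  have invariant: "g ` {1..m} = {1..m}" using assms(1) by (rule permutes_image)
  have "m choose k \<le> p * card (level_orbits g m k {1..m} k)"
    using binomial_le_card_level_orbits[OF inj _ invariant assms(2,3)] by simp
  also have "\<dots> \<le> p * num_cycles_on_ksets g m k"
    using sum_card_level_orbits_le[OF inj invariant, of "{k}"] by simp
  finally show ?thesis .
qed

lemma five_le_num_cycles_if_long_orbit:
  assumes g: "g permutes {1..m}" and "x \<in> {1..m}" "4 \<le> card (orbit g x)"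
    and "8 \<le> m" "3 \<le> k" "2 * k \<le> m"
  shows "5 \<le> num_cycles_on_ksets g m k"
proof -
  define D where "D = orbit g x"
  define c where "c j = card (level_orbits g m k D j)" for j
  have perm: "permutation g" using g by (auto simp: permutation_permutes)
  have inj: "inj g" using g by (rule permutes_inj)
  have D_sub: "D \<subseteq> {1..m}" unfolding D_def using g assms(2) by (rule permutes_orbit_subset)
  have invariant: "g ` D = D" unfolding D_def using perm by (rule image_orbit)
  have periodic: "\<forall>y\<in>D. (g ^^ card D) y = y" unfolding D_def using perm by (auto intro: funpow_card_orbit)
  have "card D \<le> m" using card_mono[OF _ D_sub] by simp
  then have "5 \<le> (\<Sum>j\<in>{k - (m - card D)..k}. c j)"
    using assms(3-6) binomial_le_card_level_orbits[OF inj D_sub invariant _ periodic]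
    unfolding c_def D_def by (intro five_le_sum_levels) auto
  also have "\<dots> \<le> num_cycles_on_ksets g m k"
    unfolding c_def using sum_card_level_orbits_le[OF inj invariant] by simp
  finally show ?thesis .
qed

theorem lemma3p2:
  fixes m k :: nat and H :: "(nat \<Rightarrow> nat) set" and g :: "nat \<Rightarrow> nat"
  assumes "0 < m" "0 < k" "3 \<le> k" "2 * k \<le> m"
    and "H = Sym m \<or> H = Alt m"
    and "g \<in> H"
    and "num_cycles_on_ksets g m k \<le> 4"
  shows "m \<le> 7"
proof (rule ccontr)
  assume "\<not> m \<le> 7"
  then have m: "8 \<le> m" by simp
  have g: "g permutes {1..m}" using assms(5,6) unfolding Sym_def Alt_def by auto
  have "5 \<le> num_cycles_on_ksets g m k"
  proof (cases "\<forall>x\<in>{1..m}. card (orbit g x) \<le> 3")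
    case True
    moreover have "permutation g" using g by (auto simp: permutation_permutes)
    ultimately have "\<forall>x\<in>{1..m}. (g ^^ 6) x = x" by (blast intro: funpow_six_if_card_orbit_le_three)
    with g have "m choose k \<le> 6 * num_cycles_on_ksets g m k"
      by (intro binomial_le_mult_num_cycles_if_periodic) auto
    moreover have "(8::nat) choose 3 \<le> m choose 3" using m by (rule binomial_right_mono)
    moreover have "m choose 3 \<le> m choose k" using assms(3,4) by (intro binomial_le_binomial_inner) auto
    ultimately show ?thesis by (simp add: numeral_eq_Suc)
  next
    case False
    then obtain x where x: "x \<in> {1..m}" "4 \<le> card (orbit g x)" by auto
    show ?thesis using five_le_num_cycles_if_long_orbit[OF g x m assms(3,4)] .
  qed
  with assms(7) show False by simp
qed

end
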